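(* For every positive integer $n$, the pairs $(2n,3n)$ and $(2n,5n)$ are tame; that is, for every integer $c>3n$ there is a tame polynomial automorphism of $\mathbb{C}^3$ with multidegree $(2n,3n,c)$, and for every integer $c>5n$ there is a tame polynomial automorphism of $\mathbb{C}^3$ with multidegree $(2n,5n,c)$.
   Context: For a polynomial automorphism $F=(F_1,\ldots,F_n)$ of $\mathbb{C}^n$, its multidegree is $\operatorname{mdeg}F:=(\deg F_1,\ldots,\deg F_n)$, where $\deg$ is total degree. A map is elementary if it changes one coordinate $X_j$ to $X_j+g$ with $g$ a polynomial in the other variables and fixes the remaining coordinates. A polynomial automorphism is tame if it is a composition of invertible affine-linear maps and elementary maps. A pair $(a,b)$ of positive integers with $a<b$ and $a\nmid b$ is called tame if for every integer $c>b$ there exists a tame polynomial automorphism of $\mathbb{C}^3$ with multidegree $(a,b,c)$. *)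

theory Defs
  imports Complex_Main "HOL-Library.Poly_Mapping"
begin

text \<open>Polynomials in the variables X_0, X_1, X_2 over the complex numbers,
  represented as finitely supported maps from exponent vectors to coefficients.\<close>
type_synonym mpoly = "(nat \<Rightarrow>\<^sub>0 nat) \<Rightarrow>\<^sub>0 complex"

type_synonym pt3 = "complex \<times> complex \<times> complex"

definition vars :: "mpoly \<Rightarrow> nat set" where
  "vars p = (\<Union>m\<in>Poly_Mapping.keys p. Poly_Mapping.keys (m :: nat \<Rightarrow>\<^sub>0 nat))"

definition poly3 :: "mpoly \<Rightarrow> bool" where
  "poly3 p \<longleftrightarrow> vars p \<subseteq> {0, 1, 2}"

text \<open>Total degree (the zero polynomial gets degree 0 by convention).\<close>
definition tdeg :: "mpoly \<Rightarrow> nat" where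
  "tdeg p = Max (insert 0 ((\<lambda>m. sum (Poly_Mapping.lookup m) (Poly_Mapping.keys m)) ` Poly_Mapping.keys p))"

definition ev3 :: "mpoly \<Rightarrow> pt3 \<Rightarrow> complex" where
  "ev3 p v = (case v of (x, y, z) \<Rightarrow>
     (\<Sum>m\<in>Poly_Mapping.keys p. Poly_Mapping.lookup p m * x ^ Poly_Mapping.lookup m 0 * y ^ Poly_Mapping.lookup m 1 * z ^ Poly_Mapping.lookup m 2))"

definition polymap :: "mpoly \<Rightarrow> mpoly \<Rightarrow> mpoly \<Rightarrow> pt3 \<Rightarrow> pt3" where
  "polymap F1 F2 F3 = (\<lambda>v. (ev3 F1 v, ev3 F2 v, ev3 F3 v))"

definition mdeg :: "mpoly \<Rightarrow> mpoly \<Rightarrow> mpoly \<Rightarrow> nat \<times> nat \<times> nat" where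
  "mdeg F1 F2 F3 = (tdeg F1, tdeg F2, tdeg F3)"

definition affine_inv :: "(pt3 \<Rightarrow> pt3) \<Rightarrow> bool" where
  "affine_inv f \<longleftrightarrow> bij f \<and>
     (\<exists>P Q R. poly3 P \<and> poly3 Q \<and> poly3 R \<and> tdeg P \<le> 1 \<and> tdeg Q \<le> 1 \<and> tdeg R \<le> 1
              \<and> f = polymap P Q R)"

definition elementary :: "(pt3 \<Rightarrow> pt3) \<Rightarrow> bool" where
  "elementary f \<longleftrightarrow> (\<exists>j g. j \<in> {0, 1, 2} \<and> vars g \<subseteq> {0, 1, 2} - {j} \<and>
     f = (\<lambda>(x, y, z). (if j = 0 then x + ev3 g (x, y, z) else x,
                        if j = 1 then y + ev3 g (x, y, z) else y,
                        if j = 2 then z + ev3 g (x, y, z) else z)))"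

inductive_set tame_maps :: "(pt3 \<Rightarrow> pt3) set" where
  tame_id: "id \<in> tame_maps"
| tame_aff: "f \<in> tame_maps \<Longrightarrow> affine_inv g \<Longrightarrow> g \<circ> f \<in> tame_maps"
| tame_elem: "f \<in> tame_maps \<Longrightarrow> elementary g \<Longrightarrow> g \<circ> f \<in> tame_maps"

definition tame_automorphism :: "mpoly \<Rightarrow> mpoly \<Rightarrow> mpoly \<Rightarrow> bool" where
  "tame_automorphism F1 F2 F3 \<longleftrightarrow> poly3 F1 \<and> poly3 F2 \<and> poly3 F3 \<and>
     polymap F1 F2 F3 \<in> tame_maps"

definition tame_pair :: "nat \<Rightarrow> nat \<Rightarrow> bool" where
  "tame_pair a b \<longleftrightarrow> 0 < a \<and> a < b \<and> \<not> a dvd b \<and>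
     (\<forall>c::nat. c > b \<longrightarrow> (\<exists>F1 F2 F3. tame_automorphism F1 F2 F3 \<and> mdeg F1 F2 F3 = (a, b, c)))"

end

theory Submission
  imports Defs "HOL-Computational_Algebra.Polynomial"
begin

(*
  For the pairs (2n, 3n) and (2n, 5n) we write down explicit triangular maps
     F1 = x + c z^(2n),   F2 = y + z^b + h(x, z^n),   F3 = z + (F2^2 - F1^m) * F1^k
  (m = 3 resp. m = 5), each a composition of three elementary maps and hence tame.  The
  polynomial h is chosen so that the top-degree parts of F2^2 and F1^m cancel; the remainder
  F2^2 - F1^m then has total degree m n + b, so that deg F3 = m n + b + 2 n k.  Every c > m n
  is of this form with 1 <= b <= 2n, except c = 6 for the pair (2, 5), which is realised by
  F3 = z + F1^3 instead.
*)

definition mon :: "(nat \<Rightarrow>\<^sub>0 nat) \<Rightarrow> pt3 \<Rightarrow> complex" where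
  "mon m v = (case v of (x, y, z) \<Rightarrow>
     x ^ Poly_Mapping.lookup m 0 * y ^ Poly_Mapping.lookup m 1 * z ^ Poly_Mapping.lookup m 2)"

lemma ev3_mon: "ev3 p v = (\<Sum>m\<in>Poly_Mapping.keys p. Poly_Mapping.lookup p m * mon m v)"
  by (cases v) (simp add: ev3_def mon_def mult.assoc)

lemma ev3_mon_superset:
  assumes "finite A" "Poly_Mapping.keys p \<subseteq> A"
  shows "ev3 p v = (\<Sum>m\<in>A. Poly_Mapping.lookup p m * mon m v)"
  unfolding ev3_mon
  by (rule sum.mono_neutral_left) (use assms in \<open>auto simp: in_keys_iff\<close>)

lemma mon_add: "mon (a + b) v = mon a v * mon b v"
  by (cases v) (simp add: mon_def lookup_add power_add)

lemma ev3_0 [simp]: "ev3 0 v = 0"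
  by (simp add: ev3_mon)

lemma ev3_add [simp]: "ev3 (p + q) v = ev3 p v + ev3 q v"
proof -
  let ?A = "Poly_Mapping.keys p \<union> Poly_Mapping.keys q"
  have "ev3 (p + q) v = (\<Sum>m\<in>?A. Poly_Mapping.lookup (p + q) m * mon m v)"
    by (rule ev3_mon_superset) (auto simp: keys_add)
  also have "\<dots> = (\<Sum>m\<in>?A. Poly_Mapping.lookup p m * mon m v) + (\<Sum>m\<in>?A. Poly_Mapping.lookup q m * mon m v)"
    by (simp add: lookup_add distrib_right sum.distrib)
  also have "\<dots> = ev3 p v + ev3 q v"
    by (simp add: ev3_mon_superset[symmetric])
  finally show ?thesis .
qed

lemma ev3_single [simp]: "ev3 (Poly_Mapping.single m c) v = c * mon m v"
  by (simp add: ev3_mon)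

lemma ev3_sum: "finite I \<Longrightarrow> ev3 (\<Sum>i\<in>I. f i) v = (\<Sum>i\<in>I. ev3 (f i) v)"
  by (induction I rule: finite_induct) auto

lemma ev3_uminus [simp]: "ev3 (- p) v = - ev3 p v"
  using minus_unique[of "ev3 p v" "ev3 (- p) v"] ev3_add[of p "- p" v] by simp

lemma ev3_diff [simp]: "ev3 (p - q) v = ev3 p v - ev3 q v"
  using ev3_add[of p "- q" v] by simp

text \<open>Every polynomial is the sum of its terms; this reduces multiplicativity to monomials.\<close>
lemma monomial_expansion:
  "p = (\<Sum>m\<in>Poly_Mapping.keys p. Poly_Mapping.single m (Poly_Mapping.lookup p m))"
  by (rule poly_mapping_eqI) (simp add: lookup_sum lookup_single when_def in_keys_iff)

lemma ev3_single_mult: "ev3 (Poly_Mapping.single a c * q) v = c * mon a v * ev3 q v"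
proof -
  have "Poly_Mapping.single a c * q
      = (\<Sum>m\<in>Poly_Mapping.keys q. Poly_Mapping.single (a + m) (c * Poly_Mapping.lookup q m))"
    by (subst monomial_expansion[of q]) (simp add: sum_distrib_left mult_single)
  then have "ev3 (Poly_Mapping.single a c * q) v
      = (\<Sum>m\<in>Poly_Mapping.keys q. c * Poly_Mapping.lookup q m * mon (a + m) v)"
    by (simp add: ev3_sum)
  then show ?thesis
    by (simp add: ev3_mon sum_distrib_left mon_add mult_ac)
qed

lemma ev3_mult [simp]: "ev3 (p * q) v = ev3 p v * ev3 q v"
proof -
  have "p * q = (\<Sum>m\<in>Poly_Mapping.keys p. Poly_Mapping.single m (Poly_Mapping.lookup p m) * q)"
    by (subst monomial_expansion[of p]) (simp add: sum_distrib_right)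
  then have "ev3 (p * q) v
      = (\<Sum>m\<in>Poly_Mapping.keys p. Poly_Mapping.lookup p m * mon m v * ev3 q v)"
    by (simp add: ev3_sum ev3_single_mult)
  then show ?thesis
    by (simp add: ev3_mon sum_distrib_right)
qed

lemma ev3_one [simp]: "ev3 1 v = 1"
  using ev3_single[of 0 1 v] by (cases v) (simp add: mon_def)

lemma ev3_power [simp]: "ev3 (p ^ k) v = ev3 p v ^ k"
  by (induction k) auto

lemma ev3_numeral [simp]: "ev3 (numeral k) v = numeral k"
  using ev3_single[of 0 "numeral k" v] by (cases v) (simp add: mon_def)

definition X :: "nat \<Rightarrow> mpoly" where
  "X i = Poly_Mapping.single (Poly_Mapping.single i 1) 1"

text \<open>The simplifier normalises \<open>1 :: nat\<close> to \<open>Suc 0\<close>, hence the form of the second equation.\<close>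
lemma ev3_X [simp]:
  "ev3 (X 0) (x, y, z) = x" "ev3 (X (Suc 0)) (x, y, z) = y" "ev3 (X 2) (x, y, z) = z"
  by (simp_all add: X_def mon_def lookup_single)

lemma vars_add: "vars (p + q) \<subseteq> vars p \<union> vars q"
  unfolding vars_def using keys_add[of p q] by blast

lemma vars_mult: "vars (p * q) \<subseteq> vars p \<union> vars q"
proof
  fix i assume "i \<in> vars (p * q)"
  then obtain m where m: "m \<in> Poly_Mapping.keys (p * q)" "i \<in> Poly_Mapping.keys m"
    unfolding vars_def by blast
  then obtain a b where "m = a + b" "a \<in> Poly_Mapping.keys p" "b \<in> Poly_Mapping.keys q"
    using keys_mult[of p q] by blast
  then show "i \<in> vars p \<union> vars q"
    using m(2) keys_add[of a b] unfolding vars_def by blast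
qed

lemma vars_add_subset: "vars p \<subseteq> S \<Longrightarrow> vars q \<subseteq> S \<Longrightarrow> vars (p + q) \<subseteq> S"
  using vars_add by blast

lemma vars_diff_subset: "vars p \<subseteq> S \<Longrightarrow> vars q \<subseteq> S \<Longrightarrow> vars (p - q) \<subseteq> S"
  using vars_add_subset[of p S "- q"] by (simp add: vars_def)

lemma vars_mult_subset: "vars p \<subseteq> S \<Longrightarrow> vars q \<subseteq> S \<Longrightarrow> vars (p * q) \<subseteq> S"
  using vars_mult by blast

lemma vars_power_subset: "vars p \<subseteq> S \<Longrightarrow> vars (p ^ k) \<subseteq> S"
proof (induction k)
  case 0
  show ?case by (simp add: vars_def)
next
  case (Suc k)
  then show ?case by (simp add: vars_mult_subset)
qed

lemma vars_numeral_subset: "vars (numeral k) \<subseteq> S"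
  by (simp add: vars_def flip: single_numeral)

lemma vars_X_subset: "i \<in> S \<Longrightarrow> vars (X i) \<subseteq> S"
  by (simp add: vars_def X_def)

lemmas vars_subset_intros =
  vars_add_subset vars_diff_subset vars_mult_subset vars_power_subset
  vars_numeral_subset vars_X_subset

text \<open>The rules \<open>tdeg_le_intros\<close> compute a bound for an
  explicitly written polynomial (\<open>rule order_trans, (rule tdeg_le_intros)+\<close>), which is then
  compared with the target bound by arithmetic.\<close>

definition mon_deg :: "(nat \<Rightarrow>\<^sub>0 nat) \<Rightarrow> nat" where
  "mon_deg m = sum (Poly_Mapping.lookup m) (Poly_Mapping.keys m)"

lemma tdeg_eq_Max: "tdeg p = Max (insert 0 (mon_deg ` Poly_Mapping.keys p))"
  by (simp add: tdeg_def mon_deg_def)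

lemma tdeg_le: "(\<And>m. m \<in> Poly_Mapping.keys p \<Longrightarrow> mon_deg m \<le> d) \<Longrightarrow> tdeg p \<le> d"
  unfolding tdeg_eq_Max by (simp add: Max_le_iff)

lemma mon_deg_le_tdeg: "m \<in> Poly_Mapping.keys p \<Longrightarrow> mon_deg m \<le> tdeg p"
  unfolding tdeg_eq_Max by (rule Max_ge) auto

lemma mon_deg_add: "mon_deg (a + b) = mon_deg a + mon_deg b"
proof -
  let ?A = "Poly_Mapping.keys a \<union> Poly_Mapping.keys b"
  have "mon_deg m = sum (Poly_Mapping.lookup m) ?A" if "Poly_Mapping.keys m \<subseteq> ?A" for m
    unfolding mon_deg_def by (rule sum.mono_neutral_left) (use that in \<open>auto simp: in_keys_iff\<close>)
  then show ?thesis
    by (simp add: keys_add lookup_add sum.distrib)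
qed

lemma tdeg_add_le: "tdeg p \<le> a \<Longrightarrow> tdeg q \<le> b \<Longrightarrow> tdeg (p + q) \<le> max a b"
  by (rule tdeg_le) (use keys_add[of p q] mon_deg_le_tdeg[of _ p] mon_deg_le_tdeg[of _ q] in fastforce)

lemma tdeg_uminus [simp]: "tdeg (- p) = tdeg p"
  by (simp add: tdeg_eq_Max)

lemma tdeg_diff_le: "tdeg p \<le> a \<Longrightarrow> tdeg q \<le> b \<Longrightarrow> tdeg (p - q) \<le> max a b"
  using tdeg_add_le[of p a "- q" b] by simp

lemma tdeg_mult_le: "tdeg p \<le> a \<Longrightarrow> tdeg q \<le> b \<Longrightarrow> tdeg (p * q) \<le> a + b"
proof (rule tdeg_le)
  fix m assume "tdeg p \<le> a" "tdeg q \<le> b" "m \<in> Poly_Mapping.keys (p * q)"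
  then obtain u w where "m = u + w" "u \<in> Poly_Mapping.keys p" "w \<in> Poly_Mapping.keys q"
    using keys_mult[of p q] by blast
  with \<open>tdeg p \<le> a\<close> \<open>tdeg q \<le> b\<close> show "mon_deg m \<le> a + b"
    using mon_deg_le_tdeg[of u p] mon_deg_le_tdeg[of w q] by (simp add: mon_deg_add)
qed

lemma tdeg_one: "tdeg 1 = 0"
  by (simp add: tdeg_eq_Max mon_deg_def)

lemma tdeg_power_le: "tdeg p \<le> a \<Longrightarrow> tdeg (p ^ k) \<le> k * a"
proof (induction k)
  case (Suc k)
  then show ?case using tdeg_mult_le[of p a "p ^ k" "k * a"] by simp
qed (simp add: tdeg_one)

lemma tdeg_numeral_mult_le: "tdeg p \<le> a \<Longrightarrow> tdeg (numeral k * p) \<le> a"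
  using tdeg_mult_le[of "numeral k" 0 p a] by (simp add: tdeg_eq_Max mon_deg_def flip: single_numeral)

lemma tdeg_X_le: "tdeg (X i) \<le> 1"
  by (simp add: tdeg_eq_Max mon_deg_def X_def)

lemmas tdeg_le_intros =
  tdeg_numeral_mult_le tdeg_add_le tdeg_diff_le tdeg_mult_le tdeg_power_le tdeg_X_le

lemma lookup_le_mon_deg: "Poly_Mapping.lookup m i \<le> mon_deg m"
  unfolding mon_deg_def
  by (cases "i \<in> Poly_Mapping.keys m") (auto intro: member_le_sum simp: in_keys_iff)

lemma tdeg_ge_z_axis:
  fixes q :: "complex poly"
  assumes restr: "\<And>t. ev3 p (0, 0, t) = poly q t" and coeff: "coeff q d \<noteq> 0"
  shows "d \<le> tdeg p"
proof -
  define c where "c m = Poly_Mapping.lookup p m * 0 ^ Poly_Mapping.lookup m 0 * 0 ^ Poly_Mapping.lookup m 1"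
    for m
  define r where "r = (\<Sum>m\<in>Poly_Mapping.keys p. monom (c m) (Poly_Mapping.lookup m 2))"
  have "poly r t = poly q t" for t
    by (simp add: r_def c_def restr[symmetric] ev3_def poly_sum poly_monom mult_ac)
  then have "r = q"
    by (metis poly_eq_poly_eq_iff ext)
  moreover have "coeff r d = (\<Sum>m\<in>Poly_Mapping.keys p. if Poly_Mapping.lookup m 2 = d then c m else 0)"
    by (simp add: r_def coeff_sum)
  ultimately have "(\<Sum>m\<in>Poly_Mapping.keys p. if Poly_Mapping.lookup m 2 = d then c m else 0) \<noteq> 0"
    using coeff by simp
  then obtain m where "m \<in> Poly_Mapping.keys p" "(if Poly_Mapping.lookup m 2 = d then c m else 0) \<noteq> 0"
    by (rule sum.not_neutral_contains_not_neutral)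
  then show ?thesis
    using lookup_le_mon_deg[of m 2] mon_deg_le_tdeg[of m p] by (auto split: if_splits)
qed

lemma tdeg_eqI:
  fixes q :: "complex poly"
  assumes "tdeg p \<le> d" "\<And>t. ev3 p (0, 0, t) = poly q t" "coeff q d \<noteq> 0"
  shows "tdeg p = d"
  using assms tdeg_ge_z_axis by (meson antisym)

text \<open>Triangular maps are tame: \<open>(x, y, z) \<mapsto> (F1, F2, F3)\<close> with
  \<open>F1 = x + gx(y, z)\<close>, \<open>F2 = y + gy(F1, z)\<close>, \<open>F3 = z + gz(F1, F2)\<close> is the composition of three
  elementary maps.\<close>

lemma elementary_shift:
  assumes "j \<in> {0, 1, 2}" "vars g \<subseteq> {0, 1, 2} - {j}"
  shows "elementary (\<lambda>(x, y, z). (if j = 0 then x + ev3 g (x, y, z) else x,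
                                  if j = 1 then y + ev3 g (x, y, z) else y,
                                  if j = 2 then z + ev3 g (x, y, z) else z))"
  using assms unfolding elementary_def by blast

lemma triangular_tame:
  assumes g: "vars gx \<subseteq> {1, 2}" "vars gy \<subseteq> {0, 2}" "vars gz \<subseteq> {0, 1}"
    and F: "poly3 F1" "poly3 F2" "poly3 F3"
    and F1: "\<And>x y z. ev3 F1 (x, y, z) = x + ev3 gx (x, y, z)"
    and F2: "\<And>x y z. ev3 F2 (x, y, z) = y + ev3 gy (ev3 F1 (x, y, z), y, z)"
    and F3: "\<And>x y z. ev3 F3 (x, y, z) = z + ev3 gz (ev3 F1 (x, y, z), ev3 F2 (x, y, z), z)"
  shows "tame_automorphism F1 F2 F3"
proof -
  define e1 :: "pt3 \<Rightarrow> pt3" where "e1 = (\<lambda>(x, y, z). (x + ev3 gx (x, y, z), y, z))"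
  define e2 :: "pt3 \<Rightarrow> pt3" where "e2 = (\<lambda>(x, y, z). (x, y + ev3 gy (x, y, z), z))"
  define e3 :: "pt3 \<Rightarrow> pt3" where "e3 = (\<lambda>(x, y, z). (x, y, z + ev3 gz (x, y, z)))"
  have "vars gx \<subseteq> {0, 1, 2} - {0}" "vars gy \<subseteq> {0, 1, 2} - {1}" "vars gz \<subseteq> {0, 1, 2} - {2}"
    using g by auto
  then have "elementary e1" "elementary e2" "elementary e3"
    using elementary_shift[of 0 gx] elementary_shift[of 1 gy] elementary_shift[of 2 gz]
    by (simp_all add: e1_def e2_def e3_def)
  then have "e3 \<circ> (e2 \<circ> (e1 \<circ> id)) \<in> tame_maps"
    by (intro tame_maps.intros)
  moreover have "e3 \<circ> (e2 \<circ> (e1 \<circ> id)) = polymap F1 F2 F3"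
    by (auto simp: e1_def e2_def e3_def polymap_def F1 F2 F3 simp del: ev3_add ev3_mult)
  ultimately show ?thesis
    using F unfolding tame_automorphism_def by simp
qed

text \<open>Degree of the third coordinate \<open>z + L * F1^k\<close>: on the z-axis the leading coefficients of
  \<open>L\<close> and \<open>F1\<close> multiply, and nothing can cancel the resulting top coefficient.\<close>
lemma tdeg_third_component:
  fixes q :: "complex poly"
  assumes F1: "tdeg F1 \<le> e" "\<And>t. ev3 F1 (0, 0, t) = c * t ^ e" "c \<noteq> 0"
    and L: "tdeg L \<le> d" "\<And>t. ev3 L (0, 0, t) = poly q t" "coeff q d \<noteq> 0"
    and "1 < d + e * k"
  shows "tdeg (X 2 + L * F1 ^ k) = d + e * k"
proof (rule tdeg_eqI)
  show "tdeg (X 2 + L * F1 ^ k) \<le> d + e * k"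
    using \<open>1 < d + e * k\<close>
      tdeg_add_le[OF tdeg_X_le[of 2] tdeg_mult_le[OF L(1) tdeg_power_le[OF F1(1), of k]]]
    by (simp add: mult.commute)
  show "ev3 (X 2 + L * F1 ^ k) (0, 0, t) = poly (monom 1 1 + monom (c ^ k) (e * k) * q) t" for t
    by (simp add: F1(2) L(2) poly_monom power_mult_distrib power_mult mult_ac)
  show "coeff (monom 1 1 + monom (c ^ k) (e * k) * q) (d + e * k) \<noteq> 0"
    using \<open>1 < d + e * k\<close> F1(3) L(3) by (simp add: coeff_monom_mult)
qed

text \<open>The family for the pair \<open>(2n, 3n)\<close>: here \<open>F2^2 - F1^3\<close> has degree \<open>3n + b\<close>.\<close>

definition A1 :: "nat \<Rightarrow> mpoly" where
  "A1 n = X 0 + 4 * (X 2 ^ n)^2"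

definition A2 :: "nat \<Rightarrow> nat \<Rightarrow> mpoly" where
  "A2 n b = X 1 + X 2 ^ b + 3 * X 2 ^ n * X 0 + 8 * (X 2 ^ n)^3"

definition A3 :: "nat \<Rightarrow> nat \<Rightarrow> nat \<Rightarrow> mpoly" where
  "A3 n b k = X 2 + (A2 n b ^ 2 - A1 n ^ 3) * A1 n ^ k"

text \<open>The shift of the second coordinate, written in terms of the first coordinate.\<close>
definition A2_shift :: "nat \<Rightarrow> nat \<Rightarrow> mpoly" where
  "A2_shift n b = X 2 ^ b + 3 * X 2 ^ n * (X 0 - 4 * (X 2 ^ n)^2) + 8 * (X 2 ^ n)^3"

lemma A_poly3: "poly3 (A1 n)" "poly3 (A2 n b)" "poly3 (A3 n b k)"
  unfolding poly3_def A1_def A2_def A3_def by (intro vars_subset_intros; simp)+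

lemma A_shifts:
  "vars (4 * (X 2 ^ n)^2) \<subseteq> {1, 2}" "vars (A2_shift n b) \<subseteq> {0, 2}"
  "ev3 (A1 n) (x, y, z) = x + ev3 (4 * (X 2 ^ n)^2) (x, y, z)"
  "ev3 (A2 n b) (x, y, z) = y + ev3 (A2_shift n b) (ev3 (A1 n) (x, y, z), y, z)"
  unfolding A2_shift_def A1_def A2_def
  by ((intro vars_subset_intros; simp)+, simp_all add: algebra_simps)

lemma A_tame: "tame_automorphism (A1 n) (A2 n b) (A3 n b k)"
proof (rule triangular_tame[OF A_shifts(1,2) _ A_poly3 A_shifts(3,4)])
  show "vars ((X 1 ^ 2 - X 0 ^ 3) * X 0 ^ k) \<subseteq> {0, 1}"
    by (intro vars_subset_intros) auto
qed (simp add: A3_def)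

text \<open>The top-degree terms \<open>64 z^(6n)\<close> and the mixed terms cancel in \<open>F2^2 - F1^3\<close>.\<close>
lemma A_cancellation:
  "A2 n b ^ 2 - A1 n ^ 3 = 16 * (X 2 ^ n)^3 * (X 1 + X 2 ^ b) - 3 * (X 2 ^ n)^2 * X 0 ^ 2 - X 0 ^ 3
     + 6 * X 2 ^ n * X 0 * (X 1 + X 2 ^ b) + (X 1 + X 2 ^ b)^2"
  unfolding A1_def A2_def by (simp add: power2_eq_square power3_eq_cube algebra_simps)

lemma A1_z_axis: "ev3 (A1 n) (0, 0, t) = 4 * t ^ (2 * n)"
  by (simp add: A1_def power_mult mult.commute)

lemma A1_tdeg: "0 < n \<Longrightarrow> tdeg (A1 n) = 2 * n"
proof (rule tdeg_eqI[where q = "monom 4 (2 * n)"])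
  show "tdeg (A1 n) \<le> 2 * n" if "0 < n"
    unfolding A1_def by (rule order_trans, (rule tdeg_le_intros)+) (use that in simp)
qed (simp_all add: A1_z_axis poly_monom)

lemma A2_tdeg:
  assumes "0 < n" "b < 3 * n"
  shows "tdeg (A2 n b) = 3 * n"
proof (rule tdeg_eqI[where q = "monom 1 b + monom 8 (3 * n)"])
  show "tdeg (A2 n b) \<le> 3 * n"
    unfolding A2_def by (rule order_trans, (rule tdeg_le_intros)+) (use assms in simp)
qed (use assms in \<open>simp_all add: A2_def poly_monom power_mult mult.commute\<close>)

lemma A_remainder:
  assumes "0 < n" "0 < b" "b < 3 * n"
  shows "tdeg (A2 n b ^ 2 - A1 n ^ 3) \<le> 3 * n + b"
    and "ev3 (A2 n b ^ 2 - A1 n ^ 3) (0, 0, t) = poly (monom 1 (2 * b) + monom 16 (3 * n + b)) t"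
    and "coeff (monom 1 (2 * b) + monom 16 (3 * n + b) :: complex poly) (3 * n + b) \<noteq> 0"
proof -
  show "tdeg (A2 n b ^ 2 - A1 n ^ 3) \<le> 3 * n + b"
    unfolding A_cancellation
    by (rule order_trans, (rule tdeg_le_intros)+) (use assms in \<open>simp add: max_def\<close>)
  show "ev3 (A2 n b ^ 2 - A1 n ^ 3) (0, 0, t) = poly (monom 1 (2 * b) + monom 16 (3 * n + b)) t"
    unfolding A_cancellation by (simp add: poly_monom power_add power_mult algebra_simps)
  show "coeff (monom 1 (2 * b) + monom 16 (3 * n + b) :: complex poly) (3 * n + b) \<noteq> 0"
    using assms by simp
qed

lemma A3_tdeg:
  assumes "0 < n" "0 < b" "b < 3 * n"
  shows "tdeg (A3 n b k) = 3 * n + b + 2 * n * k"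
  unfolding A3_def
  by (rule tdeg_third_component[OF _ A1_z_axis _ A_remainder[OF assms]])
    (use assms A1_tdeg in auto)

text \<open>The family for the pair \<open>(2n, 5n)\<close>: here \<open>F2^2 - F1^5\<close> has degree \<open>5n + b\<close> as long as
  \<open>n + b \<ge> 3\<close>; the remaining case \<open>(2, 5, 6)\<close> uses the third coordinate \<open>z + F1^3\<close>.\<close>

definition B1 :: "nat \<Rightarrow> mpoly" where
  "B1 n = X 0 + 64 * (X 2 ^ n)^2"

definition B2 :: "nat \<Rightarrow> nat \<Rightarrow> mpoly" where
  "B2 n b = X 1 + X 2 ^ b + 1280 * (X 2 ^ n)^3 * X 0 + 15 * X 2 ^ n * X 0 ^ 2 + 32768 * (X 2 ^ n)^5"

definition B3 :: "nat \<Rightarrow> nat \<Rightarrow> nat \<Rightarrow> mpoly" where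
  "B3 n b k = X 2 + (B2 n b ^ 2 - B1 n ^ 5) * B1 n ^ k"

definition B4 :: "nat \<Rightarrow> mpoly" where
  "B4 n = X 2 + B1 n ^ 3"

text \<open>The shift of the second coordinate, written in terms of the first coordinate.\<close>
definition B2_shift :: "nat \<Rightarrow> nat \<Rightarrow> mpoly" where
  "B2_shift n b = X 2 ^ b + 1280 * (X 2 ^ n)^3 * (X 0 - 64 * (X 2 ^ n)^2)
     + 15 * X 2 ^ n * (X 0 - 64 * (X 2 ^ n)^2)^2 + 32768 * (X 2 ^ n)^5"

lemma B_poly3: "poly3 (B1 n)" "poly3 (B2 n b)" "poly3 (B3 n b k)" "poly3 (B4 n)"
  unfolding poly3_def B1_def B2_def B3_def B4_def by (intro vars_subset_intros; simp)+

lemma B_shifts: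
  "vars (64 * (X 2 ^ n)^2) \<subseteq> {1, 2}" "vars (B2_shift n b) \<subseteq> {0, 2}"
  "ev3 (B1 n) (x, y, z) = x + ev3 (64 * (X 2 ^ n)^2) (x, y, z)"
  "ev3 (B2 n b) (x, y, z) = y + ev3 (B2_shift n b) (ev3 (B1 n) (x, y, z), y, z)"
  unfolding B2_shift_def B1_def B2_def
  by ((intro vars_subset_intros; simp)+, simp_all add: algebra_simps)

lemma B3_tame: "tame_automorphism (B1 n) (B2 n b) (B3 n b k)"
proof (rule triangular_tame[OF B_shifts(1,2) _ B_poly3(1-3) B_shifts(3,4)])
  show "vars ((X 1 ^ 2 - X 0 ^ 5) * X 0 ^ k) \<subseteq> {0, 1}"
    by (intro vars_subset_intros) auto
qed (simp add: B3_def)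

lemma B4_tame: "tame_automorphism (B1 n) (B2 n b) (B4 n)"
proof (rule triangular_tame[OF B_shifts(1,2) _ B_poly3(1,2,4) B_shifts(3,4)])
  show "vars (X 0 ^ 3) \<subseteq> {0, 1}"
    by (intro vars_subset_intros) auto
qed (simp add: B4_def)

text \<open>In \<open>F2^2 - F1^5\<close> all terms of degree above \<open>5n + b\<close> cancel; the identity is proved for
  indeterminates \<open>x, y, w\<close> standing for \<open>X 0\<close>, \<open>X 1 + X 2^b\<close> and \<open>X 2^n\<close>.\<close>
lemma B_cancellation:
  "B2 n b ^ 2 - B1 n ^ 5 = 65536 * (X 2 ^ n)^5 * (X 1 + X 2 ^ b) + (X 1 + X 2 ^ b)^2
     + 2560 * X 0 * (X 1 + X 2 ^ b) * (X 2 ^ n)^3 + 30 * X 0 ^ 2 * (X 1 + X 2 ^ b) * X 2 ^ n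
     - 2560 * X 0 ^ 3 * (X 2 ^ n)^4 - 95 * X 0 ^ 4 * (X 2 ^ n)^2 - X 0 ^ 5"
proof -
  have "(y + 1280 * w^3 * x + 15 * w * x^2 + 32768 * w^5)^2 - (x + 64 * w^2)^5
     = 65536 * w^5 * y + y^2 + 2560 * x * y * w^3 + 30 * x^2 * y * w
       - 2560 * x^3 * w^4 - 95 * x^4 * w^2 - x^5" for x y w :: mpoly
    by (simp add: power2_eq_square power3_eq_cube power4_eq_xxxx numeral_eq_Suc algebra_simps)
  from this[of "X 1 + X 2 ^ b" "X 2 ^ n" "X 0"] show ?thesis
    unfolding B1_def B2_def by (simp add: add.assoc)
qed

lemma B1_z_axis: "ev3 (B1 n) (0, 0, t) = 64 * t ^ (2 * n)"
  by (simp add: B1_def power_mult mult.commute)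

lemma B1_tdeg: "0 < n \<Longrightarrow> tdeg (B1 n) = 2 * n"
proof (rule tdeg_eqI[where q = "monom 64 (2 * n)"])
  show "tdeg (B1 n) \<le> 2 * n" if "0 < n"
    unfolding B1_def by (rule order_trans, (rule tdeg_le_intros)+) (use that in simp)
qed (simp_all add: B1_z_axis poly_monom)

lemma B2_tdeg:
  assumes "0 < n" "b < 5 * n"
  shows "tdeg (B2 n b) = 5 * n"
proof (rule tdeg_eqI[where q = "monom 1 b + monom 32768 (5 * n)"])
  show "tdeg (B2 n b) \<le> 5 * n"
    unfolding B2_def by (rule order_trans, (rule tdeg_le_intros)+) (use assms in simp)
qed (use assms in \<open>simp_all add: B2_def poly_monom power_mult mult.commute\<close>)

text \<open>The remainder \<open>F2^2 - F1^5\<close> has degree \<open>5n + b\<close>; the hypothesis \<open>n + b \<ge> 3\<close> is needed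
  for the term \<open>x^3 z^(4n)\<close>.\<close>
lemma B_remainder:
  assumes "0 < n" "0 < b" "b < 5 * n" "3 \<le> n + b"
  shows "tdeg (B2 n b ^ 2 - B1 n ^ 5) \<le> 5 * n + b"
    and "ev3 (B2 n b ^ 2 - B1 n ^ 5) (0, 0, t) = poly (monom 1 (2 * b) + monom 65536 (5 * n + b)) t"
    and "coeff (monom 1 (2 * b) + monom 65536 (5 * n + b) :: complex poly) (5 * n + b) \<noteq> 0"
proof -
  show "tdeg (B2 n b ^ 2 - B1 n ^ 5) \<le> 5 * n + b"
    unfolding B_cancellation
    by (rule order_trans, (rule tdeg_le_intros)+) (use assms in \<open>simp add: max_def\<close>)
  show "ev3 (B2 n b ^ 2 - B1 n ^ 5) (0, 0, t) = poly (monom 1 (2 * b) + monom 65536 (5 * n + b)) t"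
    unfolding B_cancellation by (simp add: poly_monom power_add power_mult algebra_simps)
  show "coeff (monom 1 (2 * b) + monom 65536 (5 * n + b) :: complex poly) (5 * n + b) \<noteq> 0"
    using assms by simp
qed

lemma B3_tdeg:
  assumes "0 < n" "0 < b" "b < 5 * n" "3 \<le> n + b"
  shows "tdeg (B3 n b k) = 5 * n + b + 2 * n * k"
  unfolding B3_def
  by (rule tdeg_third_component[OF _ B1_z_axis _ B_remainder[OF assms]])
    (use assms B1_tdeg in auto)

lemma B4_tdeg:
  assumes "0 < n"
  shows "tdeg (B4 n) = 6 * n"
proof -
  have "tdeg (X 2 + 1 * B1 n ^ 3) = 0 + 2 * n * 3"
    by (rule tdeg_third_component[OF _ B1_z_axis, where q = 1])
      (use assms B1_tdeg in \<open>auto simp: tdeg_one\<close>)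
  then show ?thesis
    by (simp add: B4_def)
qed

lemma split_exponent:
  fixes e m c :: nat
  assumes "0 < e" "m < c"
  obtains b k where "0 < b" "b \<le> e" "c = m + b + e * k"
proof
  define r where "r = c - m - 1"
  show "0 < r mod e + 1" "r mod e + 1 \<le> e"
    using assms(1) by (simp_all add: Suc_leI)
  show "c = m + (r mod e + 1) + e * (r div e)"
    using assms(2) mult_div_mod_eq[of e r] unfolding r_def by linarith
qed

lemma split_exponent_5:
  fixes n c :: nat
  assumes "0 < n" "5 * n < c" "\<not> (n = 1 \<and> c = 6)"
  obtains b k where "0 < b" "b < 5 * n" "3 \<le> n + b" "c = 5 * n + b + 2 * n * k"
proof (cases "c = 5 * n + 1")
  case True
  with assms(1,3) have "2 \<le> n"
    by auto
  show ?thesis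
  proof (rule that[of 1 0])
    show "1 < 5 * n" "3 \<le> n + 1"
      using \<open>2 \<le> n\<close> by linarith+
    show "c = 5 * n + 1 + 2 * n * 0"
      using True by simp
  qed simp
next
  case False
  with assms(1,2) have "0 < 2 * n" "5 * n + 1 < c"
    by simp_all
  then obtain b k where b: "0 < b" "b \<le> 2 * n" and c: "c = (5 * n + 1) + b + 2 * n * k"
    using split_exponent by blast
  show ?thesis
  proof (rule that[of "b + 1" k])
    show "b + 1 < 5 * n" "3 \<le> n + (b + 1)"
      using assms(1) b by linarith+
    show "c = 5 * n + (b + 1) + 2 * n * k"
      using c by simp
  qed simp
qed

lemma tame_pair_3:
  assumes "0 < n"
  shows "tame_pair (2 * n) (3 * n)"
  unfolding tame_pair_def
proof (intro conjI allI impI)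
  fix c :: nat
  assume "3 * n < c"
  moreover have "0 < 2 * n"
    using assms by simp
  ultimately obtain b k where "0 < b" "b \<le> 2 * n" and c: "c = 3 * n + b + 2 * n * k"
    using split_exponent by blast
  with assms have b: "0 < b" "b < 3 * n"
    by simp_all
  have "mdeg (A1 n) (A2 n b) (A3 n b k) = (2 * n, 3 * n, c)"
    by (simp add: mdeg_def A1_tdeg[OF assms] A2_tdeg[OF assms b(2)] A3_tdeg[OF assms b] c)
  with A_tame show "\<exists>F1 F2 F3. tame_automorphism F1 F2 F3 \<and> mdeg F1 F2 F3 = (2 * n, 3 * n, c)"
    by blast
qed (use assms in auto)

lemma tame_pair_5:
  assumes "0 < n"
  shows "tame_pair (2 * n) (5 * n)"
  unfolding tame_pair_def
proof (intro conjI allI impI)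
  fix c :: nat
  assume c: "5 * n < c"
  show "\<exists>F1 F2 F3. tame_automorphism F1 F2 F3 \<and> mdeg F1 F2 F3 = (2 * n, 5 * n, c)"
  proof (cases "n = 1 \<and> c = 6")
    case True
    then have "mdeg (B1 n) (B2 n 1) (B4 n) = (2 * n, 5 * n, c)"
      by (simp add: mdeg_def B1_tdeg B2_tdeg B4_tdeg)
    with B4_tame show ?thesis
      by blast
  next
    case False
    with assms c obtain b k where b: "0 < b" "b < 5 * n" "3 \<le> n + b"
      and "c = 5 * n + b + 2 * n * k"
      using split_exponent_5 by blast
    then have "mdeg (B1 n) (B2 n b) (B3 n b k) = (2 * n, 5 * n, c)"
      by (simp add: mdeg_def B1_tdeg[OF assms] B2_tdeg[OF assms b(2)] B3_tdeg[OF assms b])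
    with B3_tame show ?thesis
      by blast
  qed
qed (use assms in auto)

theorem corollary2:
  fixes n :: nat
  assumes "0 < n"
  shows "tame_pair (2 * n) (3 * n) \<and> tame_pair (2 * n) (5 * n)"
  using tame_pair_3[OF assms] tame_pair_5[OF assms] by simp

end
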